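(* Let $A\in\mathcal O(X)$. If $v\in\mathcal A(X;\mathbb R^m)$ satisfies $v(x)=0$ for all $x\in\mathrm{supp}(\mu)\cap A$, then $\nabla_\mu v(x)=0$ for $\mu$-a.a. $x\in A$.
   Context: Let $(X,d)$ be a separable compact metric space, $\mu$ a positive Radon measure on $X$, $\mathcal O(X)$ the open subsets, $\mathrm{supp}(\mu)$ the smallest closed set of full measure. Let $\mathcal A(X)$ be a subalgebra of $C(X)$ with $1\in\mathcal A(X)$ having the Urysohn property: for all $K\subset V\subset X$, $K$ compact, $V$ open, there is $\varphi\in\mathcal A(X)$ with $0\le\varphi\le1$, $\varphi=0$ on $X\setminus V$, $\varphi=1$ on $K$. Let $N\ge1$ and $D:\mathcal A(X)\to L^\infty_\mu(X;\mathbb R^N)$ be linear with $D(fg)=fDg+gDf$. Let $m\ge1$, $\mathcal A(X;\mathbb R^m)=\mathcal A(X)^m$, $\mathbb M^{m\times N}$ real $m\times N$ matrices with Euclidean inner product, $\nabla u$ the matrix with rows $Du_1,\dots,Du_m$. Let $\mathcal A^m_0=\{v\in\mathcal A(X;\mathbb R^m):v=0\text{ on }\mathrm{supp}(\mu)\}$, $\mathcal H^m_0=\{w\in L^\infty_\mu(X;\mathbb M^{m\times N}):w=\nabla v\ \mu\text{-a.e. for some }v\in\mathcal A^m_0\}$; for $\mu$-a.e. $x$, $N^m_\mu(x)=\{w(x):w\in\mathcal H^m_0\}$, $T^m_\mu(x)$ its orthogonal complement, $P^m_\mu(x)$ the orthogonal projection onto $T^m_\mu(x)$, $\nabla_\mu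 u(x)=P^m_\mu(x)(\nabla u(x))$. *)

theory Defs
  imports "HOL-Analysis.Analysis"
begin

text \<open>The compact separable metric space X is modelled as the whole type 'a.
  The measure is a finite Borel measure on 'a (on a compact metric space
  these are exactly the positive Radon measures).\<close>

definition mu_supp :: "'a::metric_space measure \<Rightarrow> 'a set" where
  "mu_supp M = \<Inter> {C. closed C \<and> emeasure M (- C) = 0}"

definition urysohn_algebra :: "('a::metric_space \<Rightarrow> real) set \<Rightarrow> bool" where
  "urysohn_algebra Alg \<longleftrightarrow>
     (\<forall>f\<in>Alg. continuous_on UNIV f) \<and>
     (\<lambda>x. 1) \<in> Alg \<and>
     (\<forall>f\<in>Alg. \<forall>g\<in>Alg. (\<lambda>x. f x + g x) \<in> Alg) \<and>
     (\<forall>f\<in>Alg. \<forall>c. (\<lambda>x. c * f x) \<in> Alg) \<and>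
     (\<forall>f\<in>Alg. \<forall>g\<in>Alg. (\<lambda>x. f x * g x) \<in> Alg) \<and>
     (\<forall>K V. compact K \<longrightarrow> open V \<longrightarrow> K \<subseteq> V \<longrightarrow>
        (\<exists>\<phi>\<in>Alg. (\<forall>x. 0 \<le> \<phi> x \<and> \<phi> x \<le> 1) \<and> (\<forall>x\<in>- V. \<phi> x = 0) \<and> (\<forall>x\<in>K. \<phi> x = 1)))"

definition Linfty :: "'a measure \<Rightarrow> ('a \<Rightarrow> 'b::{real_normed_vector, second_countable_topology}) set" where
  "Linfty M = {w. w \<in> borel_measurable M \<and> (\<exists>C. AE x in M. norm (w x) \<le> C)}"

definition is_derivation ::
  "'a measure \<Rightarrow> ('a \<Rightarrow> real) set \<Rightarrow> (('a \<Rightarrow> real) \<Rightarrow> 'a \<Rightarrow> real^'n) \<Rightarrow> bool" where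
  "is_derivation M Alg D \<longleftrightarrow>
     (\<forall>f\<in>Alg. D f \<in> Linfty M) \<and>
     (\<forall>f\<in>Alg. \<forall>g\<in>Alg. AE x in M. D (\<lambda>y. f y + g y) x = D f x + D g x) \<and>
     (\<forall>f\<in>Alg. \<forall>c. AE x in M. D (\<lambda>y. c * f y) x = c *\<^sub>R D f x) \<and>
     (\<forall>f\<in>Alg. \<forall>g\<in>Alg. AE x in M. D (\<lambda>y. f y * g y) x = f x *\<^sub>R D g x + g x *\<^sub>R D f x)"

text \<open>A(X;R^m) = A(X)^m.\<close>
definition vec_alg :: "('a \<Rightarrow> real) set \<Rightarrow> ('a \<Rightarrow> real^'m) set" where
  "vec_alg Alg = {u. \<forall>i. (\<lambda>x. u x $ i) \<in> Alg}"

definition grad :: "(('a \<Rightarrow> real) \<Rightarrow> 'a \<Rightarrow> real^'n) \<Rightarrow> ('a \<Rightarrow> real^'m) \<Rightarrow> 'a \<Rightarrow> real^'n^'m" where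
  "grad D u x = (\<chi> i. D (\<lambda>y. u y $ i) x)"

definition A0 :: "'a::metric_space measure \<Rightarrow> ('a \<Rightarrow> real) set \<Rightarrow> ('a \<Rightarrow> real^'m) set" where
  "A0 M Alg = {v \<in> vec_alg Alg. \<forall>x\<in>mu_supp M. v x = 0}"

definition H0 :: "'a::metric_space measure \<Rightarrow> ('a \<Rightarrow> real) set \<Rightarrow> (('a \<Rightarrow> real) \<Rightarrow> 'a \<Rightarrow> real^'n)
                   \<Rightarrow> ('a \<Rightarrow> real^'n^'m) set" where
  "H0 M Alg D = {w \<in> Linfty M. \<exists>v\<in>A0 M Alg. AE x in M. w x = grad D v x}"

definition meas_subspace_map :: "'a measure \<Rightarrow> ('a \<Rightarrow> 'b::euclidean_space set) \<Rightarrow> bool" where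
  "meas_subspace_map M S \<longleftrightarrow>
     (\<forall>x. subspace (S x)) \<and> (\<forall>z. (\<lambda>x. infdist z (S x)) \<in> borel_measurable M)"

text \<open>N is (a version of) the pointwise set x \<mapsto> {w x : w \<in> F}: the mu-essential union
  of the family F, i.e. the a.e.-smallest measurable subspace-valued map containing
  w x for mu-a.e. x, for every w in F.\<close>
definition ess_union :: "'a measure \<Rightarrow> ('a \<Rightarrow> 'b::euclidean_space) set \<Rightarrow> ('a \<Rightarrow> 'b set) \<Rightarrow> bool" where
  "ess_union M F N \<longleftrightarrow>
     meas_subspace_map M N \<and>
     (\<forall>w\<in>F. AE x in M. w x \<in> N x) \<and>
     (\<forall>S. meas_subspace_map M S \<and> (\<forall>w\<in>F. AE x in M. w x \<in> S x) \<longrightarrow> (AE x in M. N x \<subseteq> S x))"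

definition is_normal_space ::
  "'a::metric_space measure \<Rightarrow> ('a \<Rightarrow> real) set \<Rightarrow> (('a \<Rightarrow> real) \<Rightarrow> 'a \<Rightarrow> real^'n)
     \<Rightarrow> ('a \<Rightarrow> (real^'n^'m) set) \<Rightarrow> bool" where
  "is_normal_space M Alg D N \<longleftrightarrow> ess_union M (H0 M Alg D) N"

definition tangent_space :: "('a \<Rightarrow> (real^'n^'m) set) \<Rightarrow> 'a \<Rightarrow> (real^'n^'m) set" where
  "tangent_space N x = orthogonal_comp (N x)"

definition mu_grad ::
  "('a \<Rightarrow> (real^'n^'m) set) \<Rightarrow> (('a \<Rightarrow> real) \<Rightarrow> 'a \<Rightarrow> real^'n) \<Rightarrow> ('a \<Rightarrow> real^'m) \<Rightarrow> 'a \<Rightarrow> real^'n^'m" where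
  "mu_grad N D u x = closest_point (tangent_space N x) (grad D u x)"

end

theory Submission
  imports Defs
begin

text \<open>Cover the open set A by countably many compact sets K. For each K, Urysohn gives
  \<open>\<phi> \<in> Alg\<close> with \<open>\<phi> = 1\<close> on K and \<open>\<phi> = 0\<close> off A, so \<open>\<phi> v\<close> vanishes on the whole support
  and its gradient lies in \<open>N\<^sup>m\<^sub>\<mu>\<close> a.e. By the Leibniz rule, on K and a.e. on the support
  that gradient equals \<open>\<nabla>v\<close> (there \<open>\<phi> = 1\<close> and \<open>v = 0\<close>), whose tangential projection
  therefore vanishes; countable additivity finishes the argument.\<close>

lemma open_eq_Union_compact:
  fixes A :: "'a::metric_space set"
  assumes "compact (UNIV :: 'a set)" "open A"
  obtains K :: "nat \<Rightarrow> 'a set" where "\<And>n. compact (K n)" "\<And>n. K n \<subseteq> A" "A = (\<Union>n. K n)"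
proof (cases "A = UNIV")
  case True
  then show ?thesis using assms(1) that[of "\<lambda>_. UNIV"] by auto
next
  case False
  define K where "K n = {x. 1 / real (Suc n) \<le> infdist x (-A)}" for n
  have "compact (K n)" for n
  proof -
    have "closed (K n)"
      unfolding K_def by (intro closed_Collect_le continuous_intros)
    then show ?thesis using compact_Int_closed[OF assms(1)] by simp
  qed
  moreover have "K n \<subseteq> A" for n
  proof
    fix x assume "x \<in> K n"
    then have "infdist x (-A) > 0"
      unfolding K_def by (auto intro: less_le_trans[rotated])
    then show "x \<in> A" by (metis infdist_zero less_irrefl ComplI)
  qed
  moreover have "A \<subseteq> (\<Union>n. K n)"
  proof
    fix x assume "x \<in> A"
    moreover have "closed (-A)" "-A \<noteq> {}" using assms(2) False by auto
    ultimately have "infdist x (-A) \<noteq> 0" using in_closed_iff_infdist_zero by blast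
    then have "infdist x (-A) > 0" using infdist_nonneg[of x "-A"] by linarith
    then obtain n where "n > 0" "inverse (real n) < infdist x (-A)"
      using ex_inverse_of_nat_less by blast
    then have "x \<in> K (n - 1)" unfolding K_def by (simp add: divide_inverse)
    then show "x \<in> (\<Union>n. K n)" by blast
  qed
  ultimately show ?thesis using that by blast
qed

text \<open>Each compact subset of the complement of the support is covered by finitely many
  of the open null sets whose union is that complement.\<close>

lemma compl_mu_supp_null:
  fixes M :: "'a::metric_space measure"
  assumes "compact (UNIV :: 'a set)" "sets M = sets borel"
  shows "- mu_supp M \<in> null_sets M"
proof -
  have "open (- mu_supp M)" unfolding mu_supp_def by (intro open_Compl closed_Inter) auto
  then obtain K :: "nat \<Rightarrow> 'a set"
    where K: "\<And>n. compact (K n)" "\<And>n. K n \<subseteq> - mu_supp M" "- mu_supp M = (\<Union>n. K n)"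
    using open_eq_Union_compact[OF assms(1)] by blast
  define T where "T = uminus ` {C. closed C \<and> emeasure M (- C) = 0}"
  have T_null: "B \<in> null_sets M" if "B \<in> T" for B
    using that assms(2) unfolding T_def
    by (auto intro: borel_open simp: sets_eq_imp_space_eq)
  have "K n \<in> null_sets M" for n
  proof -
    have "K n \<subseteq> \<Union>T"
    proof
      fix x assume "x \<in> K n"
      then obtain C where "closed C" "emeasure M (- C) = 0" "x \<notin> C"
        using K(2) unfolding mu_supp_def by blast
      then show "x \<in> \<Union>T" unfolding T_def by blast
    qed
    moreover have "\<And>B. B \<in> T \<Longrightarrow> open B" unfolding T_def by auto
    ultimately obtain T' where T': "T' \<subseteq> T" "finite T'" "K n \<subseteq> \<Union>T'"
      by (rule compactE[OF K(1)])
    have "\<Union>T' \<in> null_sets M" using T' T_null by (intro null_sets.finite_Union) auto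
    moreover have "K n \<in> sets M"
      using K(1) assms(2) by (simp add: borel_closed compact_imp_closed)
    ultimately show ?thesis
      using null_set_Int1[of "\<Union>T'" M "K n"] T'(3) by (simp add: Int_absorb2)
  qed
  then show ?thesis unfolding K(3) by (rule null_sets_UN)
qed

lemma closest_point_orthogonal_comp_eq_0:
  fixes S :: "'b::euclidean_space set"
  assumes "subspace S" "g \<in> S"
  shows "closest_point (orthogonal_comp S) g = 0"
proof (rule closest_point_unique[symmetric])
  show "convex (orthogonal_comp S)" "closed (orthogonal_comp S)" "0 \<in> orthogonal_comp S"
    by (simp_all add: subspace_imp_convex closed_subspace subspace_0 subspace_orthogonal_comp)
  show "\<forall>z\<in>orthogonal_comp S. dist g 0 \<le> dist g z"
  proof
    fix z assume "z \<in> orthogonal_comp S"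
    then have "g \<bullet> z = 0" using assms(2) unfolding orthogonal_comp_def orthogonal_def by blast
    then have "norm g ^ 2 \<le> norm (g - z) ^ 2"
      by (simp add: power2_norm_eq_inner inner_diff_left inner_diff_right inner_commute)
    then have "norm g \<le> norm (g - z)" by (rule power2_le_imp_le) simp
    then show "dist g 0 \<le> dist g z" by (simp add: dist_norm)
  qed
qed

lemma grad_in_Linfty:
  fixes D :: "('a \<Rightarrow> real) \<Rightarrow> 'a \<Rightarrow> real^'n" and u :: "'a \<Rightarrow> real^'m"
  assumes "\<And>i. D (\<lambda>y. u y $ i) \<in> Linfty M"
  shows "grad D u \<in> Linfty M"
proof -
  have meas: "\<And>i. D (\<lambda>y. u y $ i) \<in> borel_measurable M" using assms unfolding Linfty_def by blast
  have "grad D u \<in> borel_measurable M"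
  proof (rule borel_measurable_euclidean_space[THEN iffD2], rule ballI)
    fix b :: "real^'n^'m"
    have "(\<lambda>x. grad D u x \<bullet> b) = (\<lambda>x. \<Sum>i\<in>UNIV. D (\<lambda>y. u y $ i) x \<bullet> b $ i)"
      unfolding grad_def inner_vec_def by simp
    also have "\<dots> \<in> borel_measurable M" using meas by measurable
    finally show "(\<lambda>x. grad D u x \<bullet> b) \<in> borel_measurable M" .
  qed
  moreover have "\<exists>C. AE x in M. norm (grad D u x) \<le> C"
  proof -
    have "\<forall>i. \<exists>C. AE x in M. norm (D (\<lambda>y. u y $ i) x) \<le> C"
      using assms unfolding Linfty_def by blast
    then obtain C where C: "\<And>i. AE x in M. norm (D (\<lambda>y. u y $ i) x) \<le> C i"
      by metis
    have "AE x in M. \<forall>i\<in>UNIV. norm (D (\<lambda>y. u y $ i) x) \<le> C i"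
      by (rule AE_finite_allI) (auto intro: C)
    then have "AE x in M. norm (grad D u x) \<le> (\<Sum>i\<in>UNIV. C i)"
    proof eventually_elim
      case (elim x)
      have "norm (grad D u x) \<le> (\<Sum>i\<in>UNIV. norm (grad D u x $ i))"
        unfolding norm_vec_def by (rule L2_set_le_sum) simp
      also have "\<dots> \<le> (\<Sum>i\<in>UNIV. C i)"
        using elim by (intro sum_mono) (simp add: grad_def)
      finally show ?case .
    qed
    then show ?thesis by blast
  qed
  ultimately show ?thesis unfolding Linfty_def by blast
qed

lemma scaleR_in_vec_alg:
  assumes "urysohn_algebra Alg" "\<phi> \<in> Alg" "v \<in> vec_alg Alg"
  shows "(\<lambda>y. \<phi> y *\<^sub>R v y) \<in> vec_alg Alg"
  using assms unfolding urysohn_algebra_def vec_alg_def by simp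

lemma grad_scaleR:
  fixes D :: "('a \<Rightarrow> real) \<Rightarrow> 'a \<Rightarrow> real^'n" and v :: "'a \<Rightarrow> real^'m"
  assumes "is_derivation M Alg D" "\<phi> \<in> Alg" "v \<in> vec_alg Alg"
  shows "AE x in M. grad D (\<lambda>y. \<phi> y *\<^sub>R v y) x = \<phi> x *\<^sub>R grad D v x + (\<chi> i. v x $ i *\<^sub>R D \<phi> x)"
proof -
  have "AE x in M. \<forall>i\<in>UNIV. D (\<lambda>y. \<phi> y * v y $ i) x = \<phi> x *\<^sub>R D (\<lambda>y. v y $ i) x + v x $ i *\<^sub>R D \<phi> x"
    using assms unfolding is_derivation_def vec_alg_def by (intro AE_finite_allI) auto
  then show ?thesis
    by eventually_elim (simp add: grad_def vec_eq_iff)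
qed

lemma grad_in_normal_space:
  assumes "is_derivation M Alg D" "is_normal_space M Alg D N" "w \<in> A0 M Alg"
  shows "AE x in M. grad D w x \<in> N x"
proof -
  have "grad D w \<in> Linfty M"
    using assms(1,3) unfolding is_derivation_def A0_def vec_alg_def by (intro grad_in_Linfty) blast
  then have "grad D w \<in> H0 M Alg D" unfolding H0_def using assms(3) by blast
  then show ?thesis using assms(2) unfolding is_normal_space_def ess_union_def by blast
qed

lemma mu_grad_eq_0_on_compact:
  fixes M :: "'a::metric_space measure" and D :: "('a \<Rightarrow> real) \<Rightarrow> 'a \<Rightarrow> real^'n"
    and N :: "'a \<Rightarrow> (real^'n^'m) set" and v :: "'a \<Rightarrow> real^'m"
  assumes "compact (UNIV :: 'a set)" "sets M = sets borel"
    and "urysohn_algebra Alg" "is_derivation M Alg D" "is_normal_space M Alg D N"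
    and "open A" "v \<in> vec_alg Alg" "\<forall>x \<in> mu_supp M \<inter> A. v x = 0"
    and "compact K" "K \<subseteq> A"
  shows "AE x in M. x \<in> K \<longrightarrow> mu_grad N D v x = 0"
proof -
  obtain \<phi> where \<phi>: "\<phi> \<in> Alg" "\<forall>x\<in>- A. \<phi> x = 0" "\<forall>x\<in>K. \<phi> x = 1"
    using assms(3,6,9,10) unfolding urysohn_algebra_def by metis
  define w where "w y = \<phi> y *\<^sub>R v y" for y
  have "w \<in> A0 M Alg"
    using scaleR_in_vec_alg[OF assms(3) \<phi>(1) assms(7)] assms(8) \<phi>(2)
    unfolding A0_def w_def by fastforce
  then have w_normal: "AE x in M. grad D w x \<in> N x"
    using grad_in_normal_space[OF assms(4,5)] by blast
  have in_supp: "AE x in M. x \<in> mu_supp M"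
    using AE_not_in[OF compl_mu_supp_null[OF assms(1,2)]] by simp
  have N_subspace: "\<And>x. subspace (N x)"
    using assms(5) unfolding is_normal_space_def ess_union_def meas_subspace_map_def by blast
  from w_normal grad_scaleR[OF assms(4) \<phi>(1) assms(7)] in_supp
  show ?thesis
  proof eventually_elim
    case (elim x)
    show ?case
    proof
      assume "x \<in> K"
      then have "\<phi> x = 1" "v x = 0" using \<phi>(3) assms(8,10) elim(3) by auto
      then have "grad D v x \<in> N x" using elim(1,2) unfolding w_def by (simp add: zero_vec_def[symmetric])
      then show "mu_grad N D v x = 0"
        unfolding mu_grad_def tangent_space_def by (rule closest_point_orthogonal_comp_eq_0[OF N_subspace])
    qed
  qed
qed

theorem mainTheorem8:
  fixes M :: "'a::metric_space measure"
    and Alg :: "('a \<Rightarrow> real) set"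
    and D :: "('a \<Rightarrow> real) \<Rightarrow> 'a \<Rightarrow> real^'n"
    and N :: "'a \<Rightarrow> (real^'n^'m) set"
    and A :: "'a set"
    and v :: "'a \<Rightarrow> real^'m"
  assumes "compact (UNIV :: 'a set)"
    and "\<exists>Q :: 'a set. countable Q \<and> closure Q = UNIV"
    and "sets M = sets borel"
    and "finite_measure M"
    and "urysohn_algebra Alg"
    and "is_derivation M Alg D"
    and "is_normal_space M Alg D N"
    and "open A"
    and "v \<in> vec_alg Alg"
    and "\<forall>x \<in> mu_supp M \<inter> A. v x = 0"
  shows "AE x in M. x \<in> A \<longrightarrow> mu_grad N D v x = 0"
proof -
  obtain K :: "nat \<Rightarrow> 'a set"
    where K: "\<And>n. compact (K n)" "\<And>n. K n \<subseteq> A" "A = (\<Union>n. K n)"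
    using open_eq_Union_compact[OF assms(1,8)] by blast
  have "AE x in M. \<forall>n. x \<in> K n \<longrightarrow> mu_grad N D v x = 0"
    unfolding AE_all_countable using mu_grad_eq_0_on_compact[OF assms(1,3,5,6,7,8,9,10) K(1,2)] by blast
  then show ?thesis by eventually_elim (auto simp: K(3))
qed

end
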